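(* Let $K\subset\mathbb{R}^n$ be a convex set, $\sigma>0$, $Y=\mu+\xi$ with $\mu\in K$ and $\xi\sim N(0,\sigma^2\mathbb{I}_n)$, and let $c>0$ be the fixed (sufficiently large) constant in the definition of $M^{\operatorname{loc}}$. Then for any $\varepsilon>0$ satisfying $\log M^{\operatorname{loc}}(\varepsilon)>4\big(\varepsilon^2/(2\sigma^2)\vee\log 2\big)$, $$\inf_{\hat\nu}\sup_{\mu\in K}\mathbb{E}_\mu\|\hat\nu(Y)-\mu\|^2\ge\frac{\varepsilon^2}{8c^2},$$ the infimum being over all Borel measurable $\hat\nu:\mathbb{R}^n\to\mathbb{R}^n$.
   Context: $\|\cdot\|$ is the Euclidean norm, $B(\theta,r)$ the closed Euclidean ball, $a\vee b=\max(a,b)$. $M(\delta,S)$ is the largest cardinality of a $\delta$-packing of $S$ (distinct points at mutual distance $\ge\delta$); $M^{\operatorname{loc}}(\varepsilon)=\sup_{\theta\in K}M(\varepsilon/c,B(\theta,\varepsilon)\cap K)$. *)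

theory Defs
  imports "HOL-Probability.Probability"
begin

definition packing :: "real \<Rightarrow> 'a::metric_space set \<Rightarrow> 'a set \<Rightarrow> bool" where
  "packing \<delta> S P \<longleftrightarrow> P \<subseteq> S \<and> finite P \<and> (\<forall>x\<in>P. \<forall>y\<in>P. x \<noteq> y \<longrightarrow> dist x y \<ge> \<delta>)"

definition packing_number :: "real \<Rightarrow> 'a::metric_space set \<Rightarrow> nat" where
  "packing_number \<delta> S = Sup (card ` {P. packing \<delta> S P})"

definition local_packing :: "real \<Rightarrow> 'a::metric_space set \<Rightarrow> real \<Rightarrow> nat" where
  "local_packing c K \<epsilon> = Sup ((\<lambda>\<theta>. packing_number (\<epsilon> / c) (cball \<theta> \<epsilon> \<inter> K)) ` K)"

definition gaussian :: "'a::euclidean_space \<Rightarrow> real \<Rightarrow> 'a measure" where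
  "gaussian \<mu> \<sigma> = density lborel (\<lambda>y. ennreal ((2 * pi * \<sigma>\<^sup>2) powr (- real DIM('a) / 2)
       * exp (- (norm (y - \<mu>))\<^sup>2 / (2 * \<sigma>\<^sup>2))))"

end

(*
  Let P be a maximal (eps/c)-packing of some ball B(theta, eps) inter K and delta = eps/c. For an
  estimator nu, the regions A_p = {y. |nu y - p| < delta/2}, p in P, are disjoint, so under
  N(theta, sigma^2 I) one of them has probability at most 1/|P|. Changing the centre from theta to p
  costs at most the chi-square factor exp(|p - theta|^2/sigma^2) <= exp(eps^2/sigma^2), which the
  hypothesis makes small against |P|; hence A_p has probability at most 1/2 under N(p, sigma^2 I),
  and the risk at p is at least (delta/2)^2 / 2 = delta^2/8.
*)
theory Submission
  imports Defs
begin

definition gaussian_density :: "'a::euclidean_space \<Rightarrow> real \<Rightarrow> 'a \<Rightarrow> real" where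
  "gaussian_density m \<sigma> y =
     (2 * pi * \<sigma>\<^sup>2) powr (- real DIM('a) / 2) * exp (- (norm (y - m))\<^sup>2 / (2 * \<sigma>\<^sup>2))"

lemma gaussian_eq_density: "gaussian m \<sigma> = density lborel (\<lambda>y. ennreal (gaussian_density m \<sigma> y))"
  unfolding gaussian_def gaussian_density_def by simp

lemma space_gaussian [simp]: "space (gaussian m \<sigma>) = UNIV"
  by (simp add: gaussian_def)

lemma sets_gaussian [simp]: "sets (gaussian m \<sigma>) = sets borel"
  by (simp add: gaussian_def)

lemma gaussian_density_pos: "\<sigma> > 0 \<Longrightarrow> gaussian_density m \<sigma> y > 0"
  unfolding gaussian_density_def by simp

lemma borel_measurable_gaussian_density [measurable]:
  "gaussian_density m \<sigma> \<in> borel_measurable borel"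
  unfolding gaussian_density_def by measurable

lemma gaussian_density_eq_prod_normal_density:
  fixes m y :: "'a::euclidean_space"
  assumes "\<sigma> > 0"
  shows "gaussian_density m \<sigma> y = (\<Prod>b\<in>Basis. normal_density (m \<bullet> b) \<sigma> (y \<bullet> b))"
proof -
  have "(norm (y - m))\<^sup>2 = (\<Sum>b\<in>Basis. inner (y - m) b * inner (y - m) b)"
    by (simp add: power2_norm_eq_inner flip: euclidean_inner)
  then have norm_sq: "(norm (y - m))\<^sup>2 = (\<Sum>b\<in>Basis. (y \<bullet> b - m \<bullet> b)\<^sup>2)"
    by (simp add: inner_diff_left power2_eq_square)
  have pos: "2 * pi * \<sigma>\<^sup>2 > 0"
    using assms by simp
  have root: "1 / sqrt (2 * pi * \<sigma>\<^sup>2) = (2 * pi * \<sigma>\<^sup>2) powr (-1/2)"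
    using pos by (simp add: powr_minus_divide flip: powr_half_sqrt)
  have const: "(2 * pi * \<sigma>\<^sup>2) powr (- real DIM('a) / 2) = (1 / sqrt (2 * pi * \<sigma>\<^sup>2)) ^ DIM('a)"
    unfolding root using pos by (subst powr_power) auto
  have expo: "exp (- (norm (y - m))\<^sup>2 / (2 * \<sigma>\<^sup>2))
      = (\<Prod>b\<in>Basis. exp (- (y \<bullet> b - m \<bullet> b)\<^sup>2 / (2 * \<sigma>\<^sup>2)))"
    by (simp add: norm_sq sum_negf sum_divide_distrib flip: exp_sum)
  show ?thesis
    unfolding gaussian_density_def const expo normal_density_def prod.distrib prod_constant by simp
qed

lemma nn_integral_gaussian_density:
  fixes m :: "'a::euclidean_space"
  assumes "\<sigma> > 0"
  shows "(\<integral>\<^sup>+ y. ennreal (gaussian_density m \<sigma> y) \<partial>lborel) = 1"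
proof -
  have "(\<integral>\<^sup>+ y. ennreal (gaussian_density m \<sigma> y) \<partial>lborel)
      = (\<integral>\<^sup>+ y. (\<Prod>b\<in>Basis. ennreal (normal_density (m \<bullet> b) \<sigma> (y \<bullet> b))) \<partial>lborel)"
    by (simp add: gaussian_density_eq_prod_normal_density[OF assms] prod_ennreal)
  also have "\<dots> = (\<Prod>b\<in>Basis. \<integral>\<^sup>+ x. ennreal (normal_density (m \<bullet> b) \<sigma> x) \<partial>lborel)"
    by (rule nn_integral_lborel_prod) (auto simp: assms)
  also have "\<dots> = 1"
  proof (rule prod.neutral, intro ballI)
    fix b :: 'a
    interpret prob_space "density lborel (normal_density (m \<bullet> b) \<sigma>)"
      using prob_space_normal_density assms by blast
    show "(\<integral>\<^sup>+ x. ennreal (normal_density (m \<bullet> b) \<sigma> x) \<partial>lborel) = 1"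
      using emeasure_space_1 by (simp add: emeasure_density)
  qed
  finally show ?thesis .
qed

lemma prob_space_gaussian:
  fixes m :: "'a::euclidean_space"
  assumes "\<sigma> > 0"
  shows "prob_space (gaussian m \<sigma>)"
  by (rule prob_spaceI)
    (simp add: gaussian_eq_density emeasure_density nn_integral_gaussian_density[OF assms])

text \<open>The chi-square identity behind the change of measure: by the parallelogram law, reflecting
  \<open>\<theta>\<close> through \<open>p\<close> turns the squared density at \<open>p\<close> into a product of two densities.\<close>
lemma gaussian_density_square:
  fixes p \<theta> y :: "'a::euclidean_space"
  assumes "\<sigma> > 0"
  shows "(gaussian_density p \<sigma> y)\<^sup>2 = gaussian_density \<theta> \<sigma> y * gaussian_density (2 *\<^sub>R p - \<theta>) \<sigma> y
           * exp ((norm (p - \<theta>))\<^sup>2 / \<sigma>\<^sup>2)"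
proof -
  have parallelogram: "(norm (y - \<theta>))\<^sup>2 + (norm (y - (2 *\<^sub>R p - \<theta>)))\<^sup>2
      = 2 * (norm (y - p))\<^sup>2 + 2 * (norm (p - \<theta>))\<^sup>2"
  proof -
    have "y - \<theta> = (y - p) + (p - \<theta>)" "y - (2 *\<^sub>R p - \<theta>) = (y - p) - (p - \<theta>)"
      by (simp_all add: scaleR_2 algebra_simps)
    then show ?thesis
      by (simp add: power2_norm_eq_inner inner_add_left inner_add_right inner_diff_left
          inner_diff_right inner_commute)
  qed
  have "2 * (- (norm (y - p))\<^sup>2 / (2 * \<sigma>\<^sup>2)) = - (norm (y - \<theta>))\<^sup>2 / (2 * \<sigma>\<^sup>2)
      + - (norm (y - (2 *\<^sub>R p - \<theta>)))\<^sup>2 / (2 * \<sigma>\<^sup>2) + (norm (p - \<theta>))\<^sup>2 / \<sigma>\<^sup>2"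
    using assms parallelogram by (simp add: field_simps)
  then have "(exp (- (norm (y - p))\<^sup>2 / (2 * \<sigma>\<^sup>2)))\<^sup>2 = exp (- (norm (y - \<theta>))\<^sup>2 / (2 * \<sigma>\<^sup>2))
      * exp (- (norm (y - (2 *\<^sub>R p - \<theta>)))\<^sup>2 / (2 * \<sigma>\<^sup>2)) * exp ((norm (p - \<theta>))\<^sup>2 / \<sigma>\<^sup>2)"
    by (simp flip: exp_add exp_of_nat_mult)
  then show ?thesis
    unfolding gaussian_density_def by (simp add: power_mult_distrib power2_eq_square)
qed

lemma le_weighted_amgm_of_square_eq:
  fixes x z w E t :: real
  assumes "x > 0" "t > 0" "z\<^sup>2 = x * w * E"
  shows "z \<le> t / 2 * x + E / (2 * t) * w"
proof -
  have "2 * t * x * z \<le> (t * x)\<^sup>2 + z\<^sup>2"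
    using sum_squares_ge_zero[of "t * x - z" 0] by (simp add: power2_eq_square algebra_simps)
  also have "\<dots> = (2 * t * x) * (t / 2 * x + E / (2 * t) * w)"
    using assms by (simp add: field_simps power2_eq_square)
  finally show ?thesis
    using assms by simp
qed

text \<open>Integrate over \<open>A\<close> the pointwise AM-GM bound
  \<open>g\<^sub>p = sqrt (E g\<^sub>\<theta> g\<^sub>q) \<le> t/2 g\<^sub>\<theta> + E/(2t) g\<^sub>q\<close>, where \<open>q = 2p - \<theta>\<close>.\<close>
lemma measure_gaussian_le:
  fixes p \<theta> :: "'a::euclidean_space"
  assumes "\<sigma> > 0" "t > 0" and A: "A \<in> sets borel"
  shows "measure (gaussian p \<sigma>) A
    \<le> t / 2 * measure (gaussian \<theta> \<sigma>) A + exp ((norm (p - \<theta>))\<^sup>2 / \<sigma>\<^sup>2) / (2 * t)"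
proof -
  define E where "E = exp ((norm (p - \<theta>))\<^sup>2 / \<sigma>\<^sup>2)"
  define q where "q = 2 *\<^sub>R p - \<theta>"
  interpret Gp: prob_space "gaussian p \<sigma>" by (rule prob_space_gaussian[OF assms(1)])
  interpret Gt: prob_space "gaussian \<theta> \<sigma>" by (rule prob_space_gaussian[OF assms(1)])
  interpret Gq: prob_space "gaussian q \<sigma>" by (rule prob_space_gaussian[OF assms(1)])
  have emeasure_gaussian: "emeasure (gaussian x \<sigma>) A
      = (\<integral>\<^sup>+ y. ennreal (gaussian_density x \<sigma> y) * indicator A y \<partial>lborel)" for x :: 'a
    unfolding gaussian_eq_density using A by (simp add: emeasure_density)
  have pointwise: "ennreal (gaussian_density p \<sigma> y)
      \<le> ennreal (t / 2) * ennreal (gaussian_density \<theta> \<sigma> y)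
        + ennreal (E / (2 * t)) * ennreal (gaussian_density q \<sigma> y)" for y
  proof -
    have "gaussian_density p \<sigma> y
        \<le> t / 2 * gaussian_density \<theta> \<sigma> y + E / (2 * t) * gaussian_density q \<sigma> y"
      using assms gaussian_density_pos
      by (intro le_weighted_amgm_of_square_eq) (simp_all add: gaussian_density_square E_def q_def)
    then show ?thesis
      using assms gaussian_density_pos[OF assms(1), of \<theta> y] gaussian_density_pos[OF assms(1), of q y]
      by (simp add: E_def ennreal_mult'[symmetric] ennreal_plus[symmetric] del: ennreal_plus)
  qed
  have "ennreal (measure (gaussian p \<sigma>) A) = emeasure (gaussian p \<sigma>) A"
    by (simp add: Gp.emeasure_eq_measure)
  also have "\<dots> \<le> (\<integral>\<^sup>+ y. ennreal (t / 2) * (ennreal (gaussian_density \<theta> \<sigma> y) * indicator A y)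
      + ennreal (E / (2 * t)) * (ennreal (gaussian_density q \<sigma> y) * indicator A y) \<partial>lborel)"
    unfolding emeasure_gaussian
    by (intro nn_integral_mono) (use pointwise in \<open>simp add: indicator_def\<close>)
  also have "\<dots> = ennreal (t / 2) * emeasure (gaussian \<theta> \<sigma>) A
      + ennreal (E / (2 * t)) * emeasure (gaussian q \<sigma>) A"
    using A by (simp add: emeasure_gaussian nn_integral_add nn_integral_cmult)
  also have "\<dots> \<le> ennreal (t / 2) * ennreal (measure (gaussian \<theta> \<sigma>) A) + ennreal (E / (2 * t)) * 1"
    by (intro add_mono mult_left_mono) (auto simp: Gt.emeasure_eq_measure Gq.emeasure_le_1)
  also have "\<dots> = ennreal (t / 2 * measure (gaussian \<theta> \<sigma>) A + E / (2 * t))"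
    using assms by (simp add: E_def ennreal_mult'[symmetric] ennreal_plus[symmetric] del: ennreal_plus)
  finally show ?thesis
    using assms by (subst (asm) ennreal_le_iff) (auto simp: E_def)
qed

lemma measure_gaussian_le_half:
  fixes p \<theta> :: "'a::euclidean_space"
  assumes "\<sigma> > 0" "A \<in> sets borel"
    and small: "measure (gaussian \<theta> \<sigma>) A \<le> 1 / m"
    and close: "4 * exp ((norm (p - \<theta>))\<^sup>2 / \<sigma>\<^sup>2) \<le> m"
  shows "measure (gaussian p \<sigma>) A \<le> 1 / 2"
proof -
  have "m > 0"
    using close exp_gt_zero by (smt (verit))
  have "measure (gaussian p \<sigma>) A
      \<le> m / 4 * measure (gaussian \<theta> \<sigma>) A + exp ((norm (p - \<theta>))\<^sup>2 / \<sigma>\<^sup>2) / m"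
    using measure_gaussian_le[OF assms(1) _ assms(2), of "m / 2" p \<theta>] \<open>m > 0\<close> by simp
  also have "\<dots> \<le> m / 4 * (1 / m) + 1 / 4"
    using small close \<open>m > 0\<close> by (intro add_mono mult_left_mono) (simp_all add: field_simps)
  also have "\<dots> = 1 / 2"
    using \<open>m > 0\<close> by simp
  finally show ?thesis .
qed

lemma (in prob_space) exists_prob_le_inverse_card:
  assumes "finite P" "P \<noteq> {}" "disjoint_family_on A P" "A ` P \<subseteq> events"
  shows "\<exists>p\<in>P. prob (A p) \<le> 1 / card P"
proof (rule ccontr)
  assume "\<not> ?thesis"
  then have "(\<Sum>p\<in>P. 1 / card P) < (\<Sum>p\<in>P. prob (A p))"
    using assms by (intro sum_strict_mono) (auto simp: not_le)
  also have "\<dots> = prob (\<Union>p\<in>P. A p)"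
    using assms by (intro finite_measure_finite_Union[symmetric]) auto
  also have "\<dots> \<le> 1"
    by (rule prob_le_1)
  finally show False
    using assms by simp
qed

lemma (in prob_space) nn_integral_norm_square_ge:
  fixes f :: "'a \<Rightarrow> 'b::{real_normed_vector, second_countable_topology}"
  assumes [measurable]: "f \<in> borel_measurable M" and "r \<ge> 0"
  shows "ennreal (r\<^sup>2 * (1 - prob {y \<in> space M. norm (f y - p) < r}))
    \<le> (\<integral>\<^sup>+ y. ennreal ((norm (f y - p))\<^sup>2) \<partial>M)"
proof -
  let ?B = "{y \<in> space M. norm (f y - p) < r}"
  have B: "?B \<in> events"
    by measurable
  have "ennreal (r\<^sup>2 * (1 - prob ?B)) = ennreal (r\<^sup>2) * emeasure M (space M - ?B)"
    using prob_compl[OF B] by (simp add: emeasure_eq_measure ennreal_mult)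
  also have "\<dots> = (\<integral>\<^sup>+ y. ennreal (r\<^sup>2) * indicator (space M - ?B) y \<partial>M)"
    using B by (simp add: nn_integral_cmult_indicator)
  also have "\<dots> \<le> (\<integral>\<^sup>+ y. ennreal ((norm (f y - p))\<^sup>2) \<partial>M)"
    using assms(2) by (intro nn_integral_mono) (auto simp: indicator_def intro!: ennreal_leI power_mono)
  finally show ?thesis .
qed

lemma disjoint_family_on_packing_preimages:
  fixes f :: "'b \<Rightarrow> 'a::real_normed_vector"
  assumes "packing \<delta> S P"
  shows "disjoint_family_on (\<lambda>p. {y. norm (f y - p) < \<delta> / 2}) P"
proof (unfold disjoint_family_on_def, intro ballI impI)
  fix p q assume "p \<in> P" "q \<in> P" "p \<noteq> q"
  then have "\<delta> \<le> dist p q"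
    using assms by (auto simp: packing_def)
  moreover have "dist p q < \<delta>" if "norm (f y - p) < \<delta> / 2" "norm (f y - q) < \<delta> / 2" for y
    using dist_triangle3[of p q "f y"] that by (simp add: dist_norm)
  ultimately show "{y. norm (f y - p) < \<delta> / 2} \<inter> {y. norm (f y - q) < \<delta> / 2} = {}"
    by force
qed

lemma gaussian_packing_risk_lower_bound:
  fixes \<theta> :: "'a::euclidean_space" and \<nu> :: "'a \<Rightarrow> 'a"
  assumes "\<sigma> > 0" "\<delta> > 0" and P: "packing \<delta> (cball \<theta> \<epsilon>) P"
    and card_P: "4 * exp (\<epsilon>\<^sup>2 / \<sigma>\<^sup>2) \<le> card P"
    and [measurable]: "\<nu> \<in> borel_measurable borel"
  shows "\<exists>p\<in>P. ennreal (\<delta>\<^sup>2 / 8)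
           \<le> (\<integral>\<^sup>+ y. ennreal ((norm (\<nu> y - p))\<^sup>2) \<partial>gaussian p \<sigma>)"
proof -
  define A where "A p = {y. norm (\<nu> y - p) < \<delta> / 2}" for p
  have [measurable]: "A p \<in> sets borel" for p
    unfolding A_def by measurable
  have "finite P" "P \<subseteq> cball \<theta> \<epsilon>"
    using P by (auto simp: packing_def)
  have "P \<noteq> {}"
    using card_P by (smt (verit) card.empty exp_gt_zero of_nat_0)
  have "disjoint_family_on A P"
    unfolding A_def using P by (rule disjoint_family_on_packing_preimages)
  interpret G\<theta>: prob_space "gaussian \<theta> \<sigma>"
    by (rule prob_space_gaussian[OF \<open>\<sigma> > 0\<close>])
  have "A ` P \<subseteq> G\<theta>.events"
    by auto
  then obtain p where "p \<in> P" and small: "measure (gaussian \<theta> \<sigma>) (A p) \<le> 1 / card P"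
    using G\<theta>.exists_prob_le_inverse_card \<open>finite P\<close> \<open>P \<noteq> {}\<close> \<open>disjoint_family_on A P\<close> by blast
  have "norm (p - \<theta>) \<le> \<epsilon>"
    using \<open>p \<in> P\<close> \<open>P \<subseteq> cball \<theta> \<epsilon>\<close> by (auto simp: dist_norm norm_minus_commute)
  then have "exp ((norm (p - \<theta>))\<^sup>2 / \<sigma>\<^sup>2) \<le> exp (\<epsilon>\<^sup>2 / \<sigma>\<^sup>2)"
    by (simp add: divide_right_mono power_mono)
  then have "4 * exp ((norm (p - \<theta>))\<^sup>2 / \<sigma>\<^sup>2) \<le> card P"
    using card_P by linarith
  then have half: "measure (gaussian p \<sigma>) (A p) \<le> 1 / 2"
    by (intro measure_gaussian_le_half[OF \<open>\<sigma> > 0\<close> _ small]) auto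
  interpret Gp: prob_space "gaussian p \<sigma>"
    by (rule prob_space_gaussian[OF \<open>\<sigma> > 0\<close>])
  have "ennreal (\<delta>\<^sup>2 / 8) \<le> ennreal ((\<delta> / 2)\<^sup>2 * (1 - measure (gaussian p \<sigma>) (A p)))"
    using half mult_left_mono[of "1 / 2" "1 - measure (gaussian p \<sigma>) (A p)" "(\<delta> / 2)\<^sup>2"]
    by (intro ennreal_leI) (simp add: power_divide)
  also have "\<dots> \<le> (\<integral>\<^sup>+ y. ennreal ((norm (\<nu> y - p))\<^sup>2) \<partial>gaussian p \<sigma>)"
    using Gp.nn_integral_norm_square_ge[of \<nu> "\<delta> / 2" p] \<open>\<delta> > 0\<close>
    by (simp add: A_def measurable_cong_sets[OF sets_gaussian refl])
  finally show ?thesis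
    using \<open>p \<in> P\<close> by blast
qed

text \<open>Translate a fixed finite cover of \<open>cball 0 r\<close> by \<open>\<delta>/2\<close>-balls to \<open>\<theta>\<close>: each of its balls holds
  at most one point of a \<open>\<delta>\<close>-packing.\<close>
lemma packing_in_cball_card_bounded:
  fixes r \<delta> :: real
  assumes "\<delta> > 0"
  obtains N where
    "\<And>(\<theta>::'a::{real_normed_vector, heine_borel}) S P.
       S \<subseteq> cball \<theta> r \<Longrightarrow> packing \<delta> S P \<Longrightarrow> card P \<le> N"
proof -
  have "\<forall>e>0. \<exists>k. finite k \<and> cball (0::'a) r \<subseteq> (\<Union>x\<in>k. ball x e)"
    using compact_eq_totally_bounded[of "cball (0::'a) r"] by simp
  then obtain k :: "'a set" where "finite k" and cover: "cball 0 r \<subseteq> (\<Union>x\<in>k. ball x (\<delta> / 2))"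
    using half_gt_zero[OF assms] by metis
  have "card P \<le> card k" if "S \<subseteq> cball \<theta> r" "packing \<delta> S P" for \<theta> :: 'a and S P
  proof -
    have "P \<subseteq> cball \<theta> r"
      and separated: "\<And>p q. p \<in> P \<Longrightarrow> q \<in> P \<Longrightarrow> p \<noteq> q \<Longrightarrow> \<delta> \<le> dist p q"
      using that by (auto simp: packing_def)
    define f where "f p = (SOME x. x \<in> k \<and> p - \<theta> \<in> ball x (\<delta> / 2))" for p
    have f: "f p \<in> k \<and> p - \<theta> \<in> ball (f p) (\<delta> / 2)" if "p \<in> P" for p
    proof -
      have "p - \<theta> \<in> cball 0 r"
        using that \<open>P \<subseteq> cball \<theta> r\<close> by (auto simp: dist_norm norm_minus_commute)
      then have "\<exists>x. x \<in> k \<and> p - \<theta> \<in> ball x (\<delta> / 2)"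
        using cover by blast
      then show ?thesis
        unfolding f_def by (rule someI_ex)
    qed
    have "inj_on f P"
    proof (rule inj_onI, rule ccontr)
      fix p q assume "p \<in> P" "q \<in> P" "f p = f q" "p \<noteq> q"
      have "dist p q = dist (p - \<theta>) (q - \<theta>)"
        by (simp add: dist_norm)
      also have "\<dots> \<le> dist (p - \<theta>) (f p) + dist (f q) (q - \<theta>)"
        using dist_triangle[of "p - \<theta>" "q - \<theta>" "f p"] \<open>f p = f q\<close> by (simp add: dist_commute)
      also have "\<dots> < \<delta>"
        using f[OF \<open>p \<in> P\<close>] f[OF \<open>q \<in> P\<close>] by (simp add: dist_commute)
      finally show False
        using separated[OF \<open>p \<in> P\<close> \<open>q \<in> P\<close> \<open>p \<noteq> q\<close>] by simp
    qed
    then show ?thesis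
      using f \<open>finite k\<close> by (intro card_inj_on_le[of f]) auto
  qed
  then show thesis
    using that by blast
qed

text \<open>The bound \<open>N\<close> matters: \<open>Sup\<close> of an unbounded set of naturals is the junk value \<open>0\<close>.\<close>
lemma packing_number_attained:
  assumes "\<And>P. packing \<delta> S P \<Longrightarrow> card P \<le> N"
  obtains P where "packing \<delta> S P" "card P = packing_number \<delta> S"
proof -
  let ?C = "card ` {P. packing \<delta> S P}"
  have "packing \<delta> S {}"
    by (simp add: packing_def)
  then have "?C \<noteq> {}"
    by blast
  moreover have "finite ?C"
    using assms by (intro finite_subset[of ?C "{..N}"]) auto
  ultimately have "Sup ?C \<in> ?C"
    by (simp add: cSup_eq_Max)
  then show thesis
    using that unfolding packing_number_def by auto
qed

lemma local_packing_attained: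
  fixes K :: "'a::{real_normed_vector, heine_borel} set"
  assumes "c > 0" "\<epsilon> > 0" "K \<noteq> {}"
  obtains \<theta> P
    where "\<theta> \<in> K" "packing (\<epsilon> / c) (cball \<theta> \<epsilon> \<inter> K) P" "card P = local_packing c K \<epsilon>"
proof -
  obtain N
    where N: "\<And>(\<theta>::'a) S P. S \<subseteq> cball \<theta> \<epsilon> \<Longrightarrow> packing (\<epsilon> / c) S P \<Longrightarrow> card P \<le> N"
    using packing_in_cball_card_bounded[of "\<epsilon> / c"] assms by auto
  define pn where "pn \<theta> = packing_number (\<epsilon> / c) (cball \<theta> \<epsilon> \<inter> K)" for \<theta>
  have attained: "\<exists>P. packing (\<epsilon> / c) (cball \<theta> \<epsilon> \<inter> K) P \<and> card P = pn \<theta>" for \<theta>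
    using packing_number_attained[of "\<epsilon> / c" "cball \<theta> \<epsilon> \<inter> K" N]
      N[of "cball \<theta> \<epsilon> \<inter> K" \<theta>]
    unfolding pn_def by blast
  have "pn \<theta> \<le> N" for \<theta>
    using attained[of \<theta>] N[of "cball \<theta> \<epsilon> \<inter> K" \<theta>] by fastforce
  then have "finite (pn ` K)"
    by (intro finite_subset[of "pn ` K" "{..N}"]) auto
  then have "Sup (pn ` K) \<in> pn ` K"
    using assms(3) by (simp add: cSup_eq_Max)
  then obtain \<theta> where "\<theta> \<in> K" "local_packing c K \<epsilon> = pn \<theta>"
    unfolding local_packing_def pn_def by auto
  then show thesis
    using attained[of \<theta>] that by metis
qed

theorem mainTheorem4:
  fixes K :: "'a::euclidean_space set" and \<sigma> c \<epsilon> :: real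
  assumes "convex K" and "\<sigma> > 0" and "c > 0" and "\<epsilon> > 0"
    and "ln (real (local_packing c K \<epsilon>)) > 4 * max (\<epsilon>\<^sup>2 / (2 * \<sigma>\<^sup>2)) (ln 2)"
  shows "(INF \<nu>\<in>borel_measurable (borel :: 'a measure).
            SUP \<mu>\<in>K. \<integral>\<^sup>+ y. ennreal ((norm (\<nu> y - \<mu>))\<^sup>2) \<partial>(gaussian \<mu> \<sigma>))
         \<ge> ennreal (\<epsilon>\<^sup>2 / (8 * c\<^sup>2))"
proof -
  have ln_card: "ln (real (local_packing c K \<epsilon>)) > \<epsilon>\<^sup>2 / \<sigma>\<^sup>2 + 2 * ln 2"
    using assms(5) by linarith
  moreover have "\<epsilon>\<^sup>2 / \<sigma>\<^sup>2 + 2 * ln 2 > 0"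
    by (intro add_nonneg_pos) auto
  ultimately have "local_packing c K \<epsilon> > 0"
    by (rule_tac ccontr) simp
  then have "K \<noteq> {}"
    by (auto simp: local_packing_def)
  then obtain \<theta> P where "\<theta> \<in> K" and P: "packing (\<epsilon> / c) (cball \<theta> \<epsilon> \<inter> K) P"
    and card_P: "card P = local_packing c K \<epsilon>"
    using local_packing_attained assms(3,4) by blast
  have "P \<subseteq> K" and packing_ball: "packing (\<epsilon> / c) (cball \<theta> \<epsilon>) P"
    using P by (auto simp: packing_def)
  have "ln (4 * exp (\<epsilon>\<^sup>2 / \<sigma>\<^sup>2)) < ln (card P)"
    using ln_card by (simp add: card_P ln_mult ln_realpow[of 2 2, simplified])
  then have card_P_large: "4 * exp (\<epsilon>\<^sup>2 / \<sigma>\<^sup>2) \<le> card P"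
    using \<open>local_packing c K \<epsilon> > 0\<close> by (subst (asm) ln_less_cancel_iff) (auto simp: card_P)
  show ?thesis
  proof (rule INF_greatest)
    fix \<nu> :: "'a \<Rightarrow> 'a" assume "\<nu> \<in> borel_measurable borel"
    then obtain p where "p \<in> P"
      and "ennreal ((\<epsilon> / c)\<^sup>2 / 8) \<le> (\<integral>\<^sup>+ y. ennreal ((norm (\<nu> y - p))\<^sup>2) \<partial>gaussian p \<sigma>)"
      using gaussian_packing_risk_lower_bound[OF assms(2) _ packing_ball card_P_large] assms(3,4)
      by fastforce
    with \<open>P \<subseteq> K\<close> show "ennreal (\<epsilon>\<^sup>2 / (8 * c\<^sup>2))
        \<le> (SUP \<mu>\<in>K. \<integral>\<^sup>+ y. ennreal ((norm (\<nu> y - \<mu>))\<^sup>2) \<partial>gaussian \<mu> \<sigma>)"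
      by (intro SUP_upper2[of p]) (auto simp: power_divide mult.commute)
  qed
qed

end
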